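(* Let $\epsilon_1,\epsilon_2>0$ with $\epsilon_1<\min(\epsilon_1^*,1/K_m)$ and $\epsilon_2<\min(\epsilon_2^*,1/K_m)$. Then the operator $\mathcal{A}_1:D(\mathcal{A}_1)\to\mathcal{H}$ is dissipative with respect to $\langle\cdot,\cdot\rangle_{\mathcal{H},2}$, i.e. $\langle\mathcal{A}_1X,X\rangle_{\mathcal{H},2}\le 0$ for all $X\in D(\mathcal{A}_1)$.
   Context: Let $l>0$. For a Lebesgue measurable $f:(0,l)\to\mathbb{R}$, $\overline{f}$ and $\underline{f}$ denote its essential supremum and essential infimum on $(0,l)$ (so e.g. $\underline{\eta_\omega EI}$ is the essential infimum of the product $\eta_\omega EI$). Let $\rho, I_w, EI, GJ, \eta_\omega, \eta_\phi \in L^\infty(0,l)$ with $\underline{\rho},\underline{I_w},\underline{EI},\underline{GJ},\underline{\eta_\omega},\underline{\eta_\phi}>0$, and let $k_1,k_2\ge 0$. Elements of $H^1(0,l)$ are identified with their absolutely continuous representatives. $\mathcal{H}=\{(f,g,h,z)\in H^2(0,l)\times L^2(0,l)\times H^1(0,l)\times L^2(0,l): f(0)=f'(0)=0,\ h(0)=0\}$, $\langle (f_1,g_1,h_1,z_1),(f_2,g_2,h_2,z_2)\rangle_{\mathcal{H},1}=\int_0^l [EI f_1''f_2''+\rho g_1g_2+GJ h_1'h_2'+I_w z_1z_2]\,\mathrm{d}y$, and $\langle X_1,X_2\rangle_{\mathcal{H},2}=\langle X_1,X_2\rangle_{\mathcal{H},1}+\epsilon_1\int_0^l\rho(f_1g_2+g_1f_2)\,\mathrm{d}y+\epsilon_2\int_0^l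 I_w(h_1z_2+z_1h_2)\,\mathrm{d}y$ for $X_i=(f_i,g_i,h_i,z_i)$. $K_m=\max\big(\sqrt{\overline{\rho}},\ \tfrac{16l^4\sqrt{\overline{\rho}}}{\pi^4\underline{EI}},\ \sqrt{\overline{I_w}},\ \tfrac{4l^2\sqrt{\overline{I_w}}}{\pi^2\underline{GJ}}\big)$, $\epsilon_1^*=\dfrac{4\pi^4\underline{\eta_\omega EI}}{64l^4\overline{\rho}+\pi^4\overline{\eta_\omega}\,\underline{\eta_\omega EI}}$, $\epsilon_2^*=\dfrac{4\pi^2\underline{\eta_\phi GJ}}{16l^2\overline{I_w}+\pi^2\overline{\eta_\phi}\,\underline{\eta_\phi GJ}}$. $D(\mathcal{A}_1)$ is the set of $(f,g,h,z)\in\mathcal{H}$ with $g\in H^2(0,l)$, $z\in H^1(0,l)$, $EIf''+\eta_\omega EI g''\in H^2(0,l)$, $GJh'+\eta_\phi GJ z'\in H^1(0,l)$, $g(0)=g'(0)=0$, $z(0)=0$, $(EIf''+\eta_\omega EI g'')(l)=0$, $(EIf''+\eta_\omega EIg'')'(l)=k_1(g(l)+\epsilon_1 f(l))$, $(GJh'+\eta_\phi GJ z')(l)=-k_2(z(l)+\epsilon_2 h(l))$; and $\mathcal{A}_1(f,g,h,z)=\big(g,\,-\tfrac{1}{\rho}(EIf''+\eta_\omega EIg'')'',\,z,\,\tfrac{1}{I_w}(GJh'+\eta_\phi GJ z')'\big)$. *)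

theory Defs
  imports "HOL-Analysis.Analysis"
begin

definition Iv :: "real \<Rightarrow> real measure" where
  "Iv l = lebesgue_on {0<..<l}"

definition L2 :: "real \<Rightarrow> (real \<Rightarrow> real) \<Rightarrow> bool" where
  "L2 l f \<longleftrightarrow> f \<in> borel_measurable (Iv l) \<and> integrable (Iv l) (\<lambda>x. (f x)\<^sup>2)"

definition Linf :: "real \<Rightarrow> (real \<Rightarrow> real) \<Rightarrow> bool" where
  "Linf l f \<longleftrightarrow> f \<in> borel_measurable (Iv l) \<and> (\<exists>C. AE x in Iv l. \<bar>f x\<bar> \<le> C)"

definition ess_sup :: "real \<Rightarrow> (real \<Rightarrow> real) \<Rightarrow> real" where
  "ess_sup l f = Inf {c. AE x in Iv l. f x \<le> c}"

definition ess_inf :: "real \<Rightarrow> (real \<Rightarrow> real) \<Rightarrow> real" where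
  "ess_inf l f = Sup {c. AE x in Iv l. c \<le> f x}"

text \<open>F is absolutely continuous on [0,l] with derivative G in L2(0,l).\<close>
definition has_weak_deriv :: "real \<Rightarrow> (real \<Rightarrow> real) \<Rightarrow> (real \<Rightarrow> real) \<Rightarrow> bool" where
  "has_weak_deriv l F G \<longleftrightarrow> L2 l G \<and>
     (\<forall>x\<in>{0..l}. F x = F 0 + integral\<^sup>L (lebesgue_on {0..x}) G)"

definition is_AC_rep :: "real \<Rightarrow> (real \<Rightarrow> real) \<Rightarrow> (real \<Rightarrow> real) \<Rightarrow> bool" where
  "is_AC_rep l F Fr \<longleftrightarrow> (AE x in Iv l. F x = Fr x) \<and> (\<exists>G. has_weak_deriv l Fr G)"

definition H1 :: "real \<Rightarrow> (real \<Rightarrow> real) \<Rightarrow> bool" where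
  "H1 l F \<longleftrightarrow> L2 l F \<and> (\<exists>Fr. is_AC_rep l F Fr)"

text \<open>The absolutely continuous representative (values on [0,l] are unique).\<close>
definition rep :: "real \<Rightarrow> (real \<Rightarrow> real) \<Rightarrow> (real \<Rightarrow> real)" where
  "rep l F = (SOME Fr. is_AC_rep l F Fr)"

text \<open>Weak derivative (unique up to a.e. equality).\<close>
definition wderiv :: "real \<Rightarrow> (real \<Rightarrow> real) \<Rightarrow> (real \<Rightarrow> real)" where
  "wderiv l F = (SOME G. has_weak_deriv l (rep l F) G)"

definition H2 :: "real \<Rightarrow> (real \<Rightarrow> real) \<Rightarrow> bool" where
  "H2 l F \<longleftrightarrow> H1 l F \<and> H1 l (wderiv l F)"

type_synonym state = "(real \<Rightarrow> real) \<times> (real \<Rightarrow> real) \<times> (real \<Rightarrow> real) \<times> (real \<Rightarrow> real)"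

definition Hspace :: "real \<Rightarrow> state set" where
  "Hspace l = {(f,g,h,z). H2 l f \<and> L2 l g \<and> H1 l h \<and> L2 l z \<and>
      rep l f 0 = 0 \<and> rep l (wderiv l f) 0 = 0 \<and> rep l h 0 = 0}"

definition ip1 :: "real \<Rightarrow> (real \<Rightarrow> real) \<Rightarrow> (real \<Rightarrow> real) \<Rightarrow> (real \<Rightarrow> real) \<Rightarrow> (real \<Rightarrow> real)
    \<Rightarrow> state \<Rightarrow> state \<Rightarrow> real" where
  "ip1 l EI \<rho> GJ Iw X Y = (case X of (f1,g1,h1,z1) \<Rightarrow> case Y of (f2,g2,h2,z2) \<Rightarrow>
     integral\<^sup>L (Iv l) (\<lambda>y. EI y * wderiv l (wderiv l f1) y * wderiv l (wderiv l f2) y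
        + \<rho> y * g1 y * g2 y + GJ y * wderiv l h1 y * wderiv l h2 y + Iw y * z1 y * z2 y))"

definition ip2 :: "real \<Rightarrow> (real \<Rightarrow> real) \<Rightarrow> (real \<Rightarrow> real) \<Rightarrow> (real \<Rightarrow> real) \<Rightarrow> (real \<Rightarrow> real)
    \<Rightarrow> real \<Rightarrow> real \<Rightarrow> state \<Rightarrow> state \<Rightarrow> real" where
  "ip2 l EI \<rho> GJ Iw \<epsilon>1 \<epsilon>2 X Y = ip1 l EI \<rho> GJ Iw X Y +
     (case X of (f1,g1,h1,z1) \<Rightarrow> case Y of (f2,g2,h2,z2) \<Rightarrow>
       \<epsilon>1 * integral\<^sup>L (Iv l) (\<lambda>y. \<rho> y * (f1 y * g2 y + g1 y * f2 y))
     + \<epsilon>2 * integral\<^sup>L (Iv l) (\<lambda>y. Iw y * (h1 y * z2 y + z1 y * h2 y)))"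

definition Mom :: "real \<Rightarrow> (real \<Rightarrow> real) \<Rightarrow> (real \<Rightarrow> real) \<Rightarrow> state \<Rightarrow> (real \<Rightarrow> real)" where
  "Mom l EI \<eta>w X = (case X of (f,g,h,z) \<Rightarrow>
     (\<lambda>y. EI y * wderiv l (wderiv l f) y + \<eta>w y * EI y * wderiv l (wderiv l g) y))"

definition Tor :: "real \<Rightarrow> (real \<Rightarrow> real) \<Rightarrow> (real \<Rightarrow> real) \<Rightarrow> state \<Rightarrow> (real \<Rightarrow> real)" where
  "Tor l GJ \<eta>p X = (case X of (f,g,h,z) \<Rightarrow>
     (\<lambda>y. GJ y * wderiv l h y + \<eta>p y * GJ y * wderiv l z y))"

definition DA1 :: "real \<Rightarrow> (real \<Rightarrow> real) \<Rightarrow> (real \<Rightarrow> real) \<Rightarrow> (real \<Rightarrow> real) \<Rightarrow> (real \<Rightarrow> real)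
    \<Rightarrow> real \<Rightarrow> real \<Rightarrow> real \<Rightarrow> real \<Rightarrow> state set" where
  "DA1 l EI GJ \<eta>w \<eta>p k1 k2 \<epsilon>1 \<epsilon>2 = {X \<in> Hspace l. case X of (f,g,h,z) \<Rightarrow>
      H2 l g \<and> H1 l z \<and> H2 l (Mom l EI \<eta>w X) \<and> H1 l (Tor l GJ \<eta>p X) \<and>
      rep l g 0 = 0 \<and> rep l (wderiv l g) 0 = 0 \<and> rep l z 0 = 0 \<and>
      rep l (Mom l EI \<eta>w X) l = 0 \<and>
      rep l (wderiv l (Mom l EI \<eta>w X)) l = k1 * (rep l g l + \<epsilon>1 * rep l f l) \<and>
      rep l (Tor l GJ \<eta>p X) l = - k2 * (rep l z l + \<epsilon>2 * rep l h l)}"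

definition A1 :: "real \<Rightarrow> (real \<Rightarrow> real) \<Rightarrow> (real \<Rightarrow> real) \<Rightarrow> (real \<Rightarrow> real) \<Rightarrow> (real \<Rightarrow> real)
    \<Rightarrow> (real \<Rightarrow> real) \<Rightarrow> (real \<Rightarrow> real) \<Rightarrow> state \<Rightarrow> state" where
  "A1 l \<rho> Iw EI GJ \<eta>w \<eta>p X = (case X of (f,g,h,z) \<Rightarrow>
     (g, (\<lambda>y. - (1 / \<rho> y) * wderiv l (wderiv l (Mom l EI \<eta>w X)) y),
      z, (\<lambda>y. (1 / Iw y) * wderiv l (Tor l GJ \<eta>p X) y)))"

definition Km :: "real \<Rightarrow> (real \<Rightarrow> real) \<Rightarrow> (real \<Rightarrow> real) \<Rightarrow> (real \<Rightarrow> real) \<Rightarrow> (real \<Rightarrow> real) \<Rightarrow> real" where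
  "Km l \<rho> Iw EI GJ = Max {sqrt (ess_sup l \<rho>),
      16 * l^4 * sqrt (ess_sup l \<rho>) / (pi^4 * ess_inf l EI),
      sqrt (ess_sup l Iw),
      4 * l^2 * sqrt (ess_sup l Iw) / (pi^2 * ess_inf l GJ)}"

definition eps1_star :: "real \<Rightarrow> (real \<Rightarrow> real) \<Rightarrow> (real \<Rightarrow> real) \<Rightarrow> (real \<Rightarrow> real) \<Rightarrow> real" where
  "eps1_star l \<rho> EI \<eta>w = 4 * pi^4 * ess_inf l (\<lambda>y. \<eta>w y * EI y) /
      (64 * l^4 * ess_sup l \<rho> + pi^4 * ess_sup l \<eta>w * ess_inf l (\<lambda>y. \<eta>w y * EI y))"

definition eps2_star :: "real \<Rightarrow> (real \<Rightarrow> real) \<Rightarrow> (real \<Rightarrow> real) \<Rightarrow> (real \<Rightarrow> real) \<Rightarrow> real" where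
  "eps2_star l Iw GJ \<eta>p = 4 * pi^2 * ess_inf l (\<lambda>y. \<eta>p y * GJ y) /
      (16 * l^2 * ess_sup l Iw + pi^2 * ess_sup l \<eta>p * ess_inf l (\<lambda>y. \<eta>p y * GJ y))"

end

theory Submission
  imports Defs
begin

(* Integrating by parts (twice in the bending part, once
   in the torsion part) and inserting the boundary conditions turns <A1 X, X>_2 into
     - k1 (g(l) + e1 f(l))^2 - k2 (z(l) + e2 h(l))^2
     - int (eta_w EI g''^2 + e1 EI f''^2 + e1 eta_w EI g'' f'') + e1 int rho g^2
     - int (eta_phi GJ z'^2 + e2 GJ h'^2 + e2 eta_phi GJ z' h') + e2 int I_w z^2.
   Completing the square pointwise bounds each coupled integral by
   -(1 - e sup eta / 4) inf (eta EI) int g''^2, and Wirtinger's inequality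
   int u^2 <= 4 l^2 / pi^2 int u'^2 for u(0) = 0 (applied twice to g, once to z) lets this absorb
   the positive term exactly when e1 < eps1_star and e2 < eps2_star. *)

lemma space_Iv [simp]: "space (Iv l) = {0<..<l}"
  by (simp add: Iv_def)

lemma finite_measure_Iv: "finite_measure (Iv l)"
  unfolding Iv_def by (rule finite_measure_lebesgue_on) simp

lemma borel_measurable_ident_Iv: "(\<lambda>x::real. x) \<in> borel_measurable (Iv l)"
  unfolding Iv_def by (simp add: measurable_completion measurable_restrict_space1)

lemma borel_measurable_borel_imp_Iv:
  fixes f :: "real \<Rightarrow> 'a::topological_space"
  assumes "f \<in> borel_measurable borel"
  shows "f \<in> borel_measurable (Iv l)"
  using measurable_compose[OF borel_measurable_ident_Iv assms] by simp

lemma AE_Iv_neq: "AE t in Iv l. t \<noteq> x"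
proof -
  have "AE t in lebesgue. t \<notin> {x}" by (rule AE_not_in) simp
  then have "AE t in lebesgue. t \<in> {0<..<l} \<longrightarrow> t \<noteq> x" by eventually_elim auto
  then show ?thesis unfolding Iv_def by (subst AE_restrict_space_iff) auto
qed

lemma Iv_not_AE_False:
  assumes "0 < l"
  shows "\<not> (AE x in Iv l. False)"
proof
  assume "AE x in Iv l. False"
  moreover have "{x \<in> space (Iv l). \<not> False} = space (Iv l)" by blast
  ultimately have "emeasure (Iv l) (space (Iv l)) = 0"
    using AE_iff_measurable[OF sets.top[of "Iv l"], of "\<lambda>x. False"] by blast
  moreover have "emeasure (Iv l) (space (Iv l)) = ennreal l"
    using assms unfolding Iv_def by (simp add: emeasure_restrict_space)
  ultimately show False using assms by simp
qed

lemma integral_Icc_eq_integral_Iv: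
  fixes G :: "real \<Rightarrow> real"
  assumes G: "G \<in> borel_measurable (Iv l)" and x: "0 \<le> x" "x \<le> l"
  shows "integral\<^sup>L (lebesgue_on {0..x}) G = (\<integral>t. indicator {..x} t * G t \<partial>Iv l)"
proof -
  have GI: "(\<lambda>t. indicator {0<..<l} t * G t) \<in> borel_measurable lebesgue"
    using G borel_measurable_restrict_space_iff[of "{0<..<l}" lebesgue G] unfolding Iv_def by auto
  have m: "(\<lambda>t. indicator {0<..<l} t *\<^sub>R (indicator {..x} t * G t)) \<in> borel_measurable lebesgue"
    using borel_measurable_times[OF borel_measurable_indicator GI, of "{..x}"] by (simp add: mult_ac)
  have "AE t in lebesgue. t \<notin> {0, l}"
    by (rule AE_not_in) simp
  then have ae: "AE t in lebesgue. indicator {0..x} t *\<^sub>R G t = indicator {0<..<l} t *\<^sub>R (indicator {..x} t * G t)"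
    by eventually_elim (use x in \<open>auto simp: indicator_def\<close>)
  have "integral\<^sup>L (lebesgue_on {0..x}) G = integral\<^sup>L lebesgue (\<lambda>t. indicator {0..x} t *\<^sub>R G t)"
    by (rule integral_restrict_space) auto
  also have "\<dots> = integral\<^sup>L lebesgue (\<lambda>t. indicator {0<..<l} t *\<^sub>R (indicator {..x} t * G t))"
    by (rule integral_cong_AE[OF borel_measurable_AE[OF m] m ae]) (use ae in \<open>auto elim: AE_mp\<close>)
  also have "\<dots> = (\<integral>t. indicator {..x} t * G t \<partial>Iv l)"
    unfolding Iv_def by (rule integral_restrict_space[symmetric]) auto
  finally show ?thesis .
qed

lemma integrable_bounded_mult:
  fixes a b :: "real \<Rightarrow> real"
  assumes a: "integrable M a" and b: "b \<in> borel_measurable M"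
    and bound: "\<And>x. x \<in> space M \<Longrightarrow> \<bar>b x\<bar> \<le> K"
  shows "integrable M (\<lambda>x. a x * b x)"
proof (rule Bochner_Integration.integrable_bound[OF integrable_mult_right[OF integrable_abs[OF a], of K]])
  show "(\<lambda>x. a x * b x) \<in> borel_measurable M"
    using borel_measurable_integrable[OF a] b by measurable
  show "AE x in M. norm (a x * b x) \<le> norm (K * \<bar>a x\<bar>)"
  proof (rule AE_I2)
    fix x assume "x \<in> space M"
    then have "\<bar>b x\<bar> \<le> K" by (rule bound)
    then show "norm (a x * b x) \<le> norm (K * \<bar>a x\<bar>)"
      using mult_left_mono[of "\<bar>b x\<bar>" K "\<bar>a x\<bar>"] by (simp add: abs_mult mult.commute)
  qed
qed

lemma integrable_bounded_Iv:
  fixes b :: "real \<Rightarrow> real"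
  assumes "b \<in> borel_measurable (Iv l)" "\<And>x. x \<in> {0<..<l} \<Longrightarrow> \<bar>b x\<bar> \<le> K"
  shows "integrable (Iv l) b"
proof -
  have "integrable (Iv l) (\<lambda>x. 1 * b x)"
    by (rule integrable_bounded_mult[OF finite_measure.integrable_const[OF finite_measure_Iv]])
       (use assms in auto)
  then show ?thesis by simp
qed

lemma abs_integral_indicator_mult_le:
  fixes a :: "real \<Rightarrow> real"
  assumes "integrable M a" "integrable M (\<lambda>t. indicator A t * a t)"
  shows "\<bar>\<integral>t. indicator A t * a t \<partial>M\<bar> \<le> (\<integral>t. \<bar>a t\<bar> \<partial>M)"
proof -
  have "\<bar>\<integral>t. indicator A t * a t \<partial>M\<bar> \<le> (\<integral>t. \<bar>indicator A t * a t\<bar> \<partial>M)"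
    by (rule integral_abs_bound)
  also have "\<dots> \<le> (\<integral>t. \<bar>a t\<bar> \<partial>M)"
    by (rule integral_mono) (use assms in \<open>auto simp: indicator_def\<close>)
  finally show ?thesis .
qed

lemma
  fixes a :: "real \<Rightarrow> real"
  assumes [measurable]: "a \<in> borel_measurable (Iv l)"
  shows borel_measurable_integral_atMost_Iv:
      "(\<lambda>x. \<integral>t. indicator {..x} t * a t \<partial>Iv l) \<in> borel_measurable (Iv l)"
    and borel_measurable_integral_atLeast_Iv:
      "(\<lambda>x. \<integral>t. indicator {x..} t * a t \<partial>Iv l) \<in> borel_measurable (Iv l)"
proof -
  interpret finite_measure "Iv l" by (rule finite_measure_Iv)
  note borel_measurable_ident_Iv[measurable]
  show "(\<lambda>x. \<integral>t. indicator {..x} t * a t \<partial>Iv l) \<in> borel_measurable (Iv l)"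
    unfolding indicator_def atMost_iff by measurable
  show "(\<lambda>x. \<integral>t. indicator {x..} t * a t \<partial>Iv l) \<in> borel_measurable (Iv l)"
    unfolding indicator_def atLeast_iff by measurable
qed

lemma
  fixes a :: "real \<Rightarrow> real"
  assumes "integrable (Iv l) a"
  shows integrable_indicator_atMost_mult_Iv: "integrable (Iv l) (\<lambda>t. indicator {..x} t * a t)"
    and integrable_indicator_atLeast_mult_Iv: "integrable (Iv l) (\<lambda>t. indicator {x..} t * a t)"
proof -
  have "indicator {..x} \<in> borel_measurable (Iv l)" "indicator {x..} \<in> borel_measurable (Iv l)"
    by (intro borel_measurable_borel_imp_Iv borel_measurable_indicator; simp)+
  then show "integrable (Iv l) (\<lambda>t. indicator {..x} t * a t)" "integrable (Iv l) (\<lambda>t. indicator {x..} t * a t)"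
    using integrable_bounded_mult[OF assms, of "indicator {..x}" 1]
      integrable_bounded_mult[OF assms, of "indicator {x..}" 1]
    by (simp_all add: mult.commute)
qed

lemma integral_atMost_add_atLeast_Iv:
  fixes b :: "real \<Rightarrow> real"
  assumes b: "integrable (Iv l) b"
  shows "(\<integral>t. indicator {..x} t * b t \<partial>Iv l) + (\<integral>t. indicator {x..} t * b t \<partial>Iv l) = (\<integral>t. b t \<partial>Iv l)"
proof -
  note ints = integrable_indicator_atMost_mult_Iv[OF b] integrable_indicator_atLeast_mult_Iv[OF b]
  have "(\<integral>t. indicator {..x} t * b t \<partial>Iv l) + (\<integral>t. indicator {x..} t * b t \<partial>Iv l)
      = (\<integral>t. indicator {..x} t * b t + indicator {x..} t * b t \<partial>Iv l)"
    using ints by simp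
  also have "\<dots> = (\<integral>t. b t \<partial>Iv l)"
    by (rule integral_cong_AE)
      (use ints b AE_Iv_neq[where l=l and x=x] in \<open>auto elim!: AE_mp simp: indicator_def\<close>)
  finally show ?thesis .
qed

lemma integral_mult_integral_atMost_swap_Iv:
  fixes a b :: "real \<Rightarrow> real"
  assumes a: "integrable (Iv l) a" and b: "integrable (Iv l) b"
  shows "(\<integral>x. b x * (\<integral>t. indicator {..x} t * a t \<partial>Iv l) \<partial>Iv l)
       = (\<integral>t. a t * (\<integral>x. indicator {t..} x * b x \<partial>Iv l) \<partial>Iv l)"
proof -
  interpret pair_sigma_finite "Iv l" "Iv l"
    using finite_measure_Iv by (auto simp: pair_sigma_finite_def finite_measure_def)
  note [measurable] = borel_measurable_integrable[OF a] borel_measurable_integrable[OF b]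
    borel_measurable_ident_Iv
  define f where "f = (\<lambda>x t. b x * (of_bool (t \<le> x) * a t))"
  have [measurable]: "case_prod f \<in> borel_measurable (Iv l \<Otimes>\<^sub>M Iv l)"
    unfolding f_def by measurable
  have "integrable (Iv l \<Otimes>\<^sub>M Iv l) (\<lambda>(x, t). b x * a t)"
    by (rule Fubini_integrable) (use a b in \<open>auto simp: abs_mult\<close>)
  then have "integrable (Iv l \<Otimes>\<^sub>M Iv l) (case_prod f)"
    by (rule Bochner_Integration.integrable_bound) (auto simp: f_def abs_mult)
  then have "(\<integral>t. (\<integral>x. f x t \<partial>Iv l) \<partial>Iv l) = (\<integral>x. (\<integral>t. f x t \<partial>Iv l) \<partial>Iv l)"
    by (rule Fubini_integral)
  moreover have "(\<integral>x. f x t \<partial>Iv l) = a t * (\<integral>x. indicator {t..} x * b x \<partial>Iv l)" for t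
    by (simp add: f_def indicator_def mult_ac flip: integral_mult_right_zero)
  moreover have "(\<integral>t. f x t \<partial>Iv l) = b x * (\<integral>t. indicator {..x} t * a t \<partial>Iv l)" for x
    by (simp add: f_def indicator_def)
  ultimately show ?thesis by simp
qed

subsection \<open>Absolutely continuous functions\<close>

definition abs_cont_deriv :: "real \<Rightarrow> (real \<Rightarrow> real) \<Rightarrow> (real \<Rightarrow> real) \<Rightarrow> bool" where
  "abs_cont_deriv l F G \<longleftrightarrow> integrable (Iv l) G \<and>
     (\<forall>x\<in>{0..l}. F x = F 0 + (\<integral>t. indicator {..x} t * G t \<partial>Iv l))"

lemma abs_cont_derivD:
  assumes "abs_cont_deriv l F G"
  shows "integrable (Iv l) G" "x \<in> {0..l} \<Longrightarrow> F x = F 0 + (\<integral>t. indicator {..x} t * G t \<partial>Iv l)"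
  using assms unfolding abs_cont_deriv_def by blast+

lemma L2_imp_integrable: "L2 l f \<Longrightarrow> integrable (Iv l) f"
  unfolding L2_def using finite_measure.square_integrable_imp_integrable[OF finite_measure_Iv] by blast

lemma has_weak_deriv_imp_abs_cont_deriv: "has_weak_deriv l F G \<Longrightarrow> abs_cont_deriv l F G"
  unfolding has_weak_deriv_def abs_cont_deriv_def L2_def
  using integral_Icc_eq_integral_Iv L2_imp_integrable[unfolded L2_def] by fastforce

lemma abs_cont_deriv_borel_measurable:
  assumes "abs_cont_deriv l F G"
  shows "F \<in> borel_measurable (Iv l)"
proof -
  have "(\<lambda>x. F 0 + (\<integral>t. indicator {..x} t * G t \<partial>Iv l)) \<in> borel_measurable (Iv l)"
    using borel_measurable_integral_atMost_Iv[OF borel_measurable_integrable[OF abs_cont_derivD(1)[OF assms]]]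
    by simp
  moreover have "F 0 + (\<integral>t. indicator {..x} t * G t \<partial>Iv l) = F x" if "x \<in> space (Iv l)" for x
    using abs_cont_derivD(2)[OF assms, of x] that by simp
  ultimately show ?thesis
    using measurable_cong[of "Iv l" "\<lambda>x. F 0 + (\<integral>t. indicator {..x} t * G t \<partial>Iv l)" F] by simp
qed

lemma abs_cont_deriv_bound:
  assumes "abs_cont_deriv l F G" "x \<in> {0..l}"
  shows "\<bar>F x\<bar> \<le> \<bar>F 0\<bar> + (\<integral>t. \<bar>G t\<bar> \<partial>Iv l)"
  using abs_cont_derivD(2)[OF assms] abs_integral_indicator_mult_le[OF
      abs_cont_derivD(1)[OF assms(1)] integrable_indicator_atMost_mult_Iv[OF abs_cont_derivD(1)[OF assms(1)], of x]]
  by linarith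

lemma abs_cont_deriv_square_integrable:
  assumes "abs_cont_deriv l u v"
  shows "integrable (Iv l) (\<lambda>t. (u t)\<^sup>2)"
proof -
  note um = abs_cont_deriv_borel_measurable[OF assms]
  have bound: "\<bar>u x\<bar> \<le> \<bar>u 0\<bar> + (\<integral>t. \<bar>v t\<bar> \<partial>Iv l)" if "x \<in> {0<..<l}" for x
    by (rule abs_cont_deriv_bound[OF assms]) (use that in auto)
  show ?thesis
    using integrable_bounded_mult[OF integrable_bounded_Iv[OF um bound] um bound]
    by (simp add: power2_eq_square)
qed

lemma abs_cont_deriv_endpoint:
  assumes "abs_cont_deriv l F G" "0 \<le> l"
  shows "F l = F 0 + (\<integral>t. G t \<partial>Iv l)"
proof -
  have "(\<integral>t. indicator {..l} t * G t \<partial>Iv l) = (\<integral>t. G t \<partial>Iv l)"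
    by (rule Bochner_Integration.integral_cong) (auto simp: indicator_def)
  then show ?thesis using abs_cont_derivD(2)[OF assms(1), of l] assms(2) by simp
qed

lemma integration_by_parts_abs_cont:
  assumes A: "abs_cont_deriv l A a" and B: "abs_cont_deriv l B b" and l: "0 \<le> l"
  shows "(\<integral>x. a x * B x \<partial>Iv l) + (\<integral>x. A x * b x \<partial>Iv l) = A l * B l - A 0 * B 0"
proof -
  note a = abs_cont_derivD(1)[OF A] and b = abs_cont_derivD(1)[OF B]
  define Pa where "Pa x = (\<integral>t. indicator {..x} t * a t \<partial>Iv l)" for x
  define Pb where "Pb x = (\<integral>t. indicator {..x} t * b t \<partial>Iv l)" for x
  define Qb where "Qb x = (\<integral>t. indicator {x..} t * b t \<partial>Iv l)" for x
  have bounded_mult: "integrable (Iv l) (\<lambda>x. c x * P x)"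
    if "integrable (Iv l) c" "P \<in> borel_measurable (Iv l)" "\<And>x. \<bar>P x\<bar> \<le> K"
    for c P :: "real \<Rightarrow> real" and K :: real
    using integrable_bounded_mult[OF that(1,2)] that(3) by blast
  have ints: "integrable (Iv l) (\<lambda>x. a x * Pb x)" "integrable (Iv l) (\<lambda>x. b x * Pa x)"
      "integrable (Iv l) (\<lambda>x. a x * Qb x)"
    unfolding Pa_def Pb_def Qb_def
    by (rule bounded_mult[OF a borel_measurable_integral_atMost_Iv abs_integral_indicator_mult_le[OF b]]
          bounded_mult[OF b borel_measurable_integral_atMost_Iv abs_integral_indicator_mult_le[OF a]]
          bounded_mult[OF a borel_measurable_integral_atLeast_Iv abs_integral_indicator_mult_le[OF b]];
        intro borel_measurable_integrable a b integrable_indicator_atMost_mult_Iv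
          integrable_indicator_atLeast_mult_Iv)+
  have "(\<integral>x. a x * B x \<partial>Iv l) = (\<integral>x. B 0 * a x + a x * Pb x \<partial>Iv l)"
  proof (rule Bochner_Integration.integral_cong)
    fix x assume "x \<in> space (Iv l)"
    then have "B x = B 0 + Pb x" using abs_cont_derivD(2)[OF B, of x] by (simp add: Pb_def)
    then show "a x * B x = B 0 * a x + a x * Pb x" by (simp add: algebra_simps)
  qed simp
  also have "\<dots> = B 0 * (\<integral>x. a x \<partial>Iv l) + (\<integral>x. a x * Pb x \<partial>Iv l)"
    using a ints by simp
  finally have aB: "(\<integral>x. a x * B x \<partial>Iv l) = B 0 * (\<integral>x. a x \<partial>Iv l) + (\<integral>x. a x * Pb x \<partial>Iv l)" .
  have "(\<integral>x. A x * b x \<partial>Iv l) = (\<integral>x. A 0 * b x + b x * Pa x \<partial>Iv l)"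
  proof (rule Bochner_Integration.integral_cong)
    fix x assume "x \<in> space (Iv l)"
    then have "A x = A 0 + Pa x" using abs_cont_derivD(2)[OF A, of x] by (simp add: Pa_def)
    then show "A x * b x = A 0 * b x + b x * Pa x" by (simp add: algebra_simps)
  qed simp
  also have "\<dots> = A 0 * (\<integral>x. b x \<partial>Iv l) + (\<integral>x. a x * Qb x \<partial>Iv l)"
    using b ints integral_mult_integral_atMost_swap_Iv[OF a b] by (simp add: Pa_def Qb_def)
  finally have Ab: "(\<integral>x. A x * b x \<partial>Iv l) = A 0 * (\<integral>x. b x \<partial>Iv l) + (\<integral>x. a x * Qb x \<partial>Iv l)" .
  have "(\<integral>x. a x * Pb x \<partial>Iv l) + (\<integral>x. a x * Qb x \<partial>Iv l) = (\<integral>x. a x * (Pb x + Qb x) \<partial>Iv l)"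
    using ints by (simp add: distrib_left)
  also have "\<dots> = (\<integral>x. a x \<partial>Iv l) * (\<integral>t. b t \<partial>Iv l)"
    by (simp add: Pb_def Qb_def integral_atMost_add_atLeast_Iv[OF b])
  finally show ?thesis
    using aB Ab abs_cont_deriv_endpoint[OF A l] abs_cont_deriv_endpoint[OF B l]
    by (simp add: algebra_simps)
qed

lemma integral_atMost_deriv_Iv:
  fixes f F :: "real \<Rightarrow> real"
  assumes x: "0 \<le> x" "x \<le> l" and F: "\<And>y. (F has_real_derivative f y) (at y)"
    and f: "continuous_on UNIV f"
  shows "(\<integral>t. indicator {..x} t * f t \<partial>Iv l) = F x - F 0"
proof -
  have fm: "f \<in> borel_measurable borel" using f by (rule borel_measurable_continuous_onI)
  have "(\<integral>t. indicator {..x} t * f t \<partial>Iv l) = integral\<^sup>L (lebesgue_on {0..x}) f"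
    by (rule integral_Icc_eq_integral_Iv[OF borel_measurable_borel_imp_Iv[OF fm] x, symmetric])
  also have "\<dots> = integral\<^sup>L lebesgue (\<lambda>t. indicator {0..x} t *\<^sub>R f t)"
    by (rule integral_restrict_space) auto
  also have "\<dots> = integral\<^sup>L lborel (\<lambda>t. indicator {0..x} t *\<^sub>R f t)"
    by (rule integral_completion) (use fm in simp)
  also have "\<dots> = F x - F 0"
    by (rule integral_FTC_atLeastAtMost)
      (use x F f in \<open>auto intro: continuous_on_subset has_vector_derivative_at_within
         simp: has_real_derivative_iff_has_vector_derivative\<close>)
  finally show ?thesis .
qed

subsection \<open>Wirtinger's inequality\<close>

lemma weighted_Cauchy_Schwarz_integral:
  fixes f p e :: "'a \<Rightarrow> real"
  assumes p: "\<And>t. t \<in> space M \<Longrightarrow> p t > 0" and e: "\<And>t. t \<in> space M \<Longrightarrow> e t \<ge> 0"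
    and iA: "integrable M (\<lambda>t. e t * (f t)\<^sup>2 / p t)" and iB: "integrable M (\<lambda>t. e t * p t)"
    and iC: "integrable M (\<lambda>t. e t * f t)"
  shows "(\<integral>t. e t * f t \<partial>M)\<^sup>2 \<le> (\<integral>t. e t * (f t)\<^sup>2 / p t \<partial>M) * (\<integral>t. e t * p t \<partial>M)"
proof -
  define A where "A = (\<integral>t. e t * (f t)\<^sup>2 / p t \<partial>M)"
  define B where "B = (\<integral>t. e t * p t \<partial>M)"
  define C where "C = (\<integral>t. e t * f t \<partial>M)"
  have quadratic_nonneg: "0 \<le> A - 2 * c * C + c\<^sup>2 * B" for c
  proof -
    have "A - 2 * c * C + c\<^sup>2 * B = (\<integral>t. e t * (f t - c * p t)\<^sup>2 / p t \<partial>M)"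
    proof -
      have "A - 2 * c * C + c\<^sup>2 * B
          = (\<integral>t. e t * (f t)\<^sup>2 / p t - 2 * c * (e t * f t) + c\<^sup>2 * (e t * p t) \<partial>M)"
        unfolding A_def B_def C_def using iA iB iC by simp
      also have "\<dots> = (\<integral>t. e t * (f t - c * p t)\<^sup>2 / p t \<partial>M)"
      proof (rule Bochner_Integration.integral_cong)
        fix t assume "t \<in> space M"
        then show "e t * (f t)\<^sup>2 / p t - 2 * c * (e t * f t) + c\<^sup>2 * (e t * p t) = e t * (f t - c * p t)\<^sup>2 / p t"
          using p[of t] by (simp add: field_simps power2_eq_square)
      qed simp
      finally show ?thesis .
    qed
    also have "\<dots> \<ge> 0"
      by (rule integral_nonneg_AE, rule AE_I2) (use p e in \<open>simp add: less_imp_le\<close>)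
    finally show ?thesis .
  qed
  have "B \<ge> 0" unfolding B_def
    by (rule integral_nonneg_AE, rule AE_I2) (use p e in \<open>simp add: less_imp_le\<close>)
  then consider "B = 0" | "B > 0" by linarith
  then have "C\<^sup>2 \<le> A * B"
  proof cases
    case 1
    have "C = 0"
    proof (rule ccontr)
      assume "C \<noteq> 0"
      then have "A - 2 * ((A + 1) / (2 * C)) * C = -1" by (simp add: field_simps)
      then show False using quadratic_nonneg[of "(A + 1) / (2 * C)"] 1 by simp
    qed
    then show ?thesis using 1 by simp
  next
    case 2
    have "0 \<le> A - 2 * (C / B) * C + (C / B)\<^sup>2 * B" by (rule quadratic_nonneg)
    also have "\<dots> = (A * B - C\<^sup>2) / B" using 2 by (simp add: field_simps power2_eq_square)
    finally show ?thesis using 2 by (simp add: zero_le_divide_iff)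
  qed
  then show ?thesis unfolding A_def B_def C_def .
qed

lemma integral_atMost_cos_Iv:
  assumes "x \<in> {0..l}" "k \<noteq> 0"
  shows "(\<integral>t. indicator {..x} t * cos (k * t) \<partial>Iv l) = sin (k * x) / k"
proof -
  have "((\<lambda>y. sin (k * y) / k) has_real_derivative cos (k * y)) (at y)" for y
    using assms(2) by (auto intro!: derivative_eq_intros)
  then show ?thesis
    using integral_atMost_deriv_Iv[of x l "\<lambda>y. sin (k * y) / k" "\<lambda>t. cos (k * t)"] assms(1)
    by (simp add: continuous_intros)
qed

lemma integral_atLeast_sin_Iv:
  assumes "t \<in> {0..l}" "k \<noteq> 0"
  shows "(\<integral>x. indicator {t..} x * sin (k * x) \<partial>Iv l) = (cos (k * t) - cos (k * l)) / k"
proof -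
  have F: "\<And>y. ((\<lambda>x. - cos (k * x) / k) has_real_derivative sin (k * y)) (at y)"
    using assms(2) by (auto intro!: derivative_eq_intros)
  have cont: "continuous_on UNIV (\<lambda>x. sin (k * x))" by (intro continuous_intros)
  have "integrable (Iv l) (\<lambda>x. sin (k * x))"
    by (rule integrable_bounded_Iv[of _ _ 1])
       (auto intro: borel_measurable_borel_imp_Iv borel_measurable_continuous_onI[OF cont])
  moreover have "(\<integral>x. sin (k * x) \<partial>Iv l) = (\<integral>x. indicator {..l} x * sin (k * x) \<partial>Iv l)"
    by (rule Bochner_Integration.integral_cong) (auto simp: indicator_def)
  ultimately show ?thesis
    using integral_atMost_add_atLeast_Iv[of l "\<lambda>x. sin (k * x)" t]
      integral_atMost_deriv_Iv[OF _ _ F cont, of l l] integral_atMost_deriv_Iv[OF _ _ F cont, of t l]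
      assms(1) by (simp add: diff_divide_distrib)
qed

lemma cos_weighted_square_bound:
  fixes u v :: "real \<Rightarrow> real"
  assumes u: "abs_cont_deriv l u v" and u0: "u 0 = 0" and x: "x \<in> {0<..<l}" and k: "k \<noteq> 0"
    and cos_pos: "\<And>t. t \<in> {0<..<l} \<Longrightarrow> 0 < cos (k * t)"
    and a: "integrable (Iv l) (\<lambda>t. (v t)\<^sup>2 / cos (k * t))"
  shows "(u x)\<^sup>2 \<le> sin (k * x) / k * (\<integral>t. indicator {..x} t * ((v t)\<^sup>2 / cos (k * t)) \<partial>Iv l)"
proof -
  have "integrable (Iv l) (\<lambda>t. cos (k * t))"
    by (rule integrable_bounded_Iv[of _ _ 1])
       (auto intro: borel_measurable_borel_imp_Iv borel_measurable_continuous_onI continuous_intros)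
  then have "(\<integral>t. indicator {..x} t * v t \<partial>Iv l)\<^sup>2
      \<le> (\<integral>t. indicator {..x} t * (v t)\<^sup>2 / cos (k * t) \<partial>Iv l) * (\<integral>t. indicator {..x} t * cos (k * t) \<partial>Iv l)"
    by (intro weighted_Cauchy_Schwarz_integral)
       (use cos_pos integrable_indicator_atMost_mult_Iv[OF a, of x]
          integrable_indicator_atMost_mult_Iv[OF abs_cont_derivD(1)[OF u], of x]
        in \<open>auto intro: integrable_indicator_atMost_mult_Iv\<close>)
  then show ?thesis
    using abs_cont_derivD(2)[OF u, of x] x u0 integral_atMost_cos_Iv[of x l k] k by (simp add: mult.commute)
qed

(* Weighting Cauchy-Schwarz with cos (k t), positive on the interval since k l < pi/2, bounds u(x)^2;
   integrating in x and swapping the integrals produces the factor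
   (cos (k t) - cos (k l)) / k <= cos (k t) / k in front of v(t)^2 / cos (k t). *)
lemma wirtinger_inequality_below_quarter_period:
  fixes u v :: "real \<Rightarrow> real"
  assumes u: "abs_cont_deriv l u v" and u0: "u 0 = 0" and l: "0 < l"
    and v2: "integrable (Iv l) (\<lambda>t. (v t)\<^sup>2)" and k: "0 < k" "k * l < pi / 2"
  shows "k\<^sup>2 * (\<integral>t. (u t)\<^sup>2 \<partial>Iv l) \<le> (\<integral>t. (v t)\<^sup>2 \<partial>Iv l)"
proof -
  define a where "a t = (v t)\<^sup>2 / cos (k * t)" for t
  define W where "W x = (\<integral>t. indicator {..x} t * a t \<partial>Iv l)" for x
  define S where "S t = (\<integral>x. indicator {t..} x * sin (k * x) \<partial>Iv l)" for t
  have kl: "0 < k * l" "k * l \<le> pi" using k l pi_gt_zero by (simp, linarith)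
  then have c0: "0 < cos (k * l)" using k by (intro cos_gt_zero_pi) auto
  have cos_ge: "cos (k * l) \<le> cos (k * t)" if "t \<in> {0<..<l}" for t
    using that k kl by (intro cos_monotone_0_pi_le) auto
  have cos_pos: "0 < cos (k * t)" if "t \<in> {0<..<l}" for t using cos_ge[OF that] c0 by simp
  note meas = borel_measurable_borel_imp_Iv[OF borel_measurable_continuous_onI]
  have sin: "(\<lambda>x. sin (k * x)) \<in> borel_measurable (Iv l)" "integrable (Iv l) (\<lambda>x. sin (k * x))"
    by (auto intro!: meas continuous_intros integrable_bounded_Iv[of _ _ 1])
  have "(\<lambda>t. cos (k * t)) \<in> borel_measurable (Iv l)" by (intro meas continuous_intros)
  then have "(\<lambda>t. 1 / cos (k * t)) \<in> borel_measurable (Iv l)" by measurable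
  then have "integrable (Iv l) (\<lambda>t. (v t)\<^sup>2 * (1 / cos (k * t)))"
    by (rule integrable_bounded_mult[OF v2, where K = "1 / cos (k * l)"])
       (use cos_ge cos_pos c0 in \<open>auto intro!: divide_left_mono simp: abs_of_pos\<close>)
  then have aint: "integrable (Iv l) a" by (simp add: a_def[abs_def])
  have sW: "integrable (Iv l) (\<lambda>x. sin (k * x) * W x)"
    unfolding W_def
    by (rule integrable_bounded_mult[OF sin(2) borel_measurable_integral_atMost_Iv])
       (auto intro: borel_measurable_integrable aint abs_integral_indicator_mult_le
          integrable_indicator_atMost_mult_Iv)
  have aS: "integrable (Iv l) (\<lambda>t. a t * S t)"
    unfolding S_def
    by (rule integrable_bounded_mult[OF aint borel_measurable_integral_atLeast_Iv[OF sin(1)]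
          abs_integral_indicator_mult_le[OF sin(2) integrable_indicator_atLeast_mult_Iv[OF sin(2)]]])
  have "(\<integral>t. (u t)\<^sup>2 \<partial>Iv l) \<le> (\<integral>x. sin (k * x) / k * W x \<partial>Iv l)"
    using abs_cont_deriv_square_integrable[OF u] sW cos_weighted_square_bound[OF u u0 _ _ cos_pos aint[unfolded a_def]] k
    by (intro integral_mono) (auto simp: W_def a_def)
  also have "\<dots> = (\<integral>t. a t * S t \<partial>Iv l) / k"
    using integral_mult_integral_atMost_swap_Iv[OF aint sin(2)] by (simp add: W_def S_def mult_ac)
  also have "(\<integral>t. a t * S t \<partial>Iv l) \<le> (\<integral>t. (v t)\<^sup>2 / k \<partial>Iv l)"
  proof (rule integral_mono[OF aS])
    show "integrable (Iv l) (\<lambda>t. (v t)\<^sup>2 / k)" using v2 by simp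
    fix t assume "t \<in> space (Iv l)"
    then have t: "t \<in> {0<..<l}" by simp
    have "S t \<le> cos (k * t) / k"
      using integral_atLeast_sin_Iv[of t l k] t k c0 by (simp add: S_def divide_right_mono)
    then have "a t * S t \<le> a t * (cos (k * t) / k)"
      using cos_pos[OF t] by (intro mult_left_mono) (simp_all add: a_def)
    also have "\<dots> = (v t)\<^sup>2 / k" unfolding a_def using cos_pos[OF t] by simp
    finally show "a t * S t \<le> (v t)\<^sup>2 / k" .
  qed
  finally show ?thesis
    using k by (simp add: power2_eq_square field_simps divide_right_mono)
qed

lemma wirtinger_inequality:
  fixes u v :: "real \<Rightarrow> real"
  assumes u: "abs_cont_deriv l u v" and u0: "u 0 = 0" and l: "0 < l"
    and v2: "integrable (Iv l) (\<lambda>t. (v t)\<^sup>2)"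
  shows "(\<integral>t. (u t)\<^sup>2 \<partial>Iv l) \<le> 4 * l\<^sup>2 / pi\<^sup>2 * (\<integral>t. (v t)\<^sup>2 \<partial>Iv l)"
proof -
  define k0 where "k0 = pi / (2 * l)"
  have "(k0\<^sup>2 * (\<integral>t. (u t)\<^sup>2 \<partial>Iv l)) \<le> (\<integral>t. (v t)\<^sup>2 \<partial>Iv l)"
  proof (rule field_le_mult_one_interval)
    fix z :: real assume z: "0 < z" "z < 1"
    have "sqrt z * (pi / 2) < 1 * (pi / 2)" using z by (intro mult_strict_right_mono) auto
    then have "(sqrt z * k0)\<^sup>2 * (\<integral>t. (u t)\<^sup>2 \<partial>Iv l) \<le> (\<integral>t. (v t)\<^sup>2 \<partial>Iv l)"
      using z l by (intro wirtinger_inequality_below_quarter_period[OF u u0 l v2])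
        (auto simp: k0_def)
    then show "z * (k0\<^sup>2 * (\<integral>t. (u t)\<^sup>2 \<partial>Iv l)) \<le> (\<integral>t. (v t)\<^sup>2 \<partial>Iv l)"
      using z by (simp add: power_mult_distrib)
  qed
  then show ?thesis using l by (simp add: k0_def field_simps power2_eq_square)
qed

subsection \<open>Essential bounds and Sobolev functions\<close>

lemma Linf_borel_measurable: "Linf l f \<Longrightarrow> f \<in> borel_measurable (Iv l)"
  unfolding Linf_def by blast

lemma Linf_mult:
  assumes "Linf l f" "Linf l g"
  shows "Linf l (\<lambda>x. f x * g x)"
proof -
  obtain C D where "AE x in Iv l. \<bar>f x\<bar> \<le> C" "AE x in Iv l. \<bar>g x\<bar> \<le> D"
    using assms unfolding Linf_def by blast
  then have "AE x in Iv l. \<bar>f x * g x\<bar> \<le> C * D"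
    by eventually_elim (simp add: abs_mult mult_mono')
  then show ?thesis
    using assms unfolding Linf_def by (auto intro: borel_measurable_times)
qed

lemma
  assumes "Linf l f" "0 < l"
  shows bdd_below_ess_sup_set: "bdd_below {c. AE x in Iv l. f x \<le> c}"
    and bdd_above_ess_inf_set: "bdd_above {c. AE x in Iv l. c \<le> f x}"
proof -
  obtain C where C: "AE x in Iv l. \<bar>f x\<bar> \<le> C" using assms(1) unfolding Linf_def by blast
  have "- C \<le> c" if "AE x in Iv l. f x \<le> c" for c
  proof (rule ccontr)
    assume a: "\<not> - C \<le> c"
    have "AE x in Iv l. False" using C that by eventually_elim (use a in auto)
    then show False using Iv_not_AE_False[OF assms(2)] by simp
  qed
  then show "bdd_below {c. AE x in Iv l. f x \<le> c}" by (intro bdd_belowI) simp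
  have "c \<le> C" if "AE x in Iv l. c \<le> f x" for c
  proof (rule ccontr)
    assume a: "\<not> c \<le> C"
    have "AE x in Iv l. False" using C that by eventually_elim (use a in auto)
    then show False using Iv_not_AE_False[OF assms(2)] by simp
  qed
  then show "bdd_above {c. AE x in Iv l. c \<le> f x}" by (intro bdd_aboveI) simp
qed

lemma AE_le_ess_sup:
  assumes f: "Linf l f" and l: "0 < l"
  shows "AE x in Iv l. f x \<le> ess_sup l f"
proof -
  define S where "S = {c. AE x in Iv l. f x \<le> c}"
  obtain C where "AE x in Iv l. \<bar>f x\<bar> \<le> C" using f unfolding Linf_def by blast
  then have "C \<in> S" unfolding S_def by (auto elim: eventually_mono)
  then have ex: "\<exists>c\<in>S. c < Inf S + 1 / Suc n" for n :: nat
    using cInf_less_iff[of S "Inf S + 1 / Suc n"] bdd_below_ess_sup_set[OF f l]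
    by (auto simp: S_def)
  have "\<forall>n::nat. AE x in Iv l. f x \<le> Inf S + 1 / Suc n"
  proof
    fix n :: nat
    obtain c where c: "c \<in> S" "c < Inf S + 1 / Suc n" using ex[of n] by blast
    from c(1) have "AE x in Iv l. f x \<le> c" by (simp add: S_def)
    then show "AE x in Iv l. f x \<le> Inf S + 1 / Suc n" by eventually_elim (use c(2) in auto)
  qed
  then have "AE x in Iv l. \<forall>n::nat. f x \<le> Inf S + 1 / Suc n"
    by (simp add: AE_all_countable)
  then show ?thesis
  proof eventually_elim
    case (elim x)
    show "f x \<le> ess_sup l f" unfolding ess_sup_def S_def[symmetric]
    proof (rule field_le_epsilon)
      fix e :: real assume "0 < e"
      then obtain n :: nat where "1 / Suc n < e" by (metis nat_approx_posE)
      then show "f x \<le> Inf S + e" using elim[rule_format, of n] by linarith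
    qed
  qed
qed

lemma ess_inf_eq_uminus_ess_sup: "ess_inf l f = - ess_sup l (\<lambda>x. - f x)"
proof -
  have "uminus ` {c. AE x in Iv l. - f x \<le> c} = {c. AE x in Iv l. c \<le> f x}"
  proof (intro equalityI subsetI)
    fix c assume "c \<in> {c. AE x in Iv l. c \<le> f x}"
    then have "- c \<in> {c. AE x in Iv l. - f x \<le> c}" by simp
    then show "c \<in> uminus ` {c. AE x in Iv l. - f x \<le> c}" by (metis image_eqI minus_minus)
  qed auto
  then show ?thesis unfolding ess_inf_def ess_sup_def Inf_real_def by simp
qed

lemma AE_ess_inf_le:
  assumes f: "Linf l f" and l: "0 < l"
  shows "AE x in Iv l. ess_inf l f \<le> f x"
proof -
  have "Linf l (\<lambda>x. - f x)" using f unfolding Linf_def by auto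
  from AE_le_ess_sup[OF this l] show ?thesis
    unfolding ess_inf_eq_uminus_ess_sup by (auto elim: eventually_mono)
qed

lemma ess_inf_ge:
  assumes "Linf l f" "0 < l" "AE x in Iv l. q \<le> f x"
  shows "q \<le> ess_inf l f"
  unfolding ess_inf_def using bdd_above_ess_inf_set[OF assms(1,2)] assms(3)
  by (intro cSup_upper) simp_all

lemma ess_inf_le_ess_sup:
  assumes "Linf l f" "0 < l"
  shows "ess_inf l f \<le> ess_sup l f"
proof (rule ccontr)
  assume a: "\<not> ess_inf l f \<le> ess_sup l f"
  have "AE x in Iv l. False" using AE_ess_inf_le[OF assms] AE_le_ess_sup[OF assms]
    by eventually_elim (use a in auto)
  then show False using Iv_not_AE_False[OF assms(2)] by simp
qed

lemma ess_inf_mult_pos: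
  assumes l: "0 < l" and f: "Linf l f" "Linf l g" and pos: "ess_inf l f > 0" "ess_inf l g > 0"
  shows "ess_inf l (\<lambda>y. f y * g y) > 0"
proof -
  have "AE x in Iv l. ess_inf l f * ess_inf l g \<le> f x * g x"
    using AE_ess_inf_le[OF f(1) l] AE_ess_inf_le[OF f(2) l]
    by eventually_elim (use pos in \<open>auto intro: mult_mono\<close>)
  then have "ess_inf l f * ess_inf l g \<le> ess_inf l (\<lambda>y. f y * g y)"
    by (rule ess_inf_ge[OF Linf_mult[OF f] l])
  moreover have "ess_inf l f * ess_inf l g > 0" using pos by simp
  ultimately show ?thesis by linarith
qed

lemma L2_borel_measurable: "L2 l f \<Longrightarrow> f \<in> borel_measurable (Iv l)"
  unfolding L2_def by blast

lemma integrable_L2_mult: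
  assumes "L2 l f" "L2 l g"
  shows "integrable (Iv l) (\<lambda>x. f x * g x)"
proof (rule Bochner_Integration.integrable_bound)
  show "integrable (Iv l) (\<lambda>x. (f x)\<^sup>2 + (g x)\<^sup>2)" using assms unfolding L2_def by auto
  show "(\<lambda>x. f x * g x) \<in> borel_measurable (Iv l)"
    using assms[THEN L2_borel_measurable] by measurable
  have "\<bar>f x * g x\<bar> \<le> (f x)\<^sup>2 + (g x)\<^sup>2" for x
    using sum_squares_bound[of "\<bar>f x\<bar>" "\<bar>g x\<bar>"] mult_nonneg_nonneg[OF abs_ge_zero abs_ge_zero, of "f x" "g x"]
    by (simp only: abs_mult power2_abs abs_ge_zero)
  then show "AE x in Iv l. norm (f x * g x) \<le> norm ((f x)\<^sup>2 + (g x)\<^sup>2)" by simp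
qed

lemma integrable_Linf_mult:
  assumes c: "Linf l c" and h: "integrable (Iv l) h"
  shows "integrable (Iv l) (\<lambda>x. c x * h x)"
proof -
  obtain C where C: "AE x in Iv l. \<bar>c x\<bar> \<le> C" using c unfolding Linf_def by blast
  show ?thesis
  proof (rule Bochner_Integration.integrable_bound)
    show "integrable (Iv l) (\<lambda>x. C * \<bar>h x\<bar>)" using h by simp
    show "(\<lambda>x. c x * h x) \<in> borel_measurable (Iv l)"
      using Linf_borel_measurable[OF c] h by measurable
    show "AE x in Iv l. norm (c x * h x) \<le> norm (C * \<bar>h x\<bar>)"
      using C
    proof eventually_elim
      case (elim x)
      then have "\<bar>c x\<bar> * \<bar>h x\<bar> \<le> C * \<bar>h x\<bar>" by (simp add: mult_right_mono)
      then show ?case using elim by (simp add: abs_mult)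
    qed
  qed
qed

lemma integrable_Linf_L2_mult:
  "Linf l c \<Longrightarrow> L2 l u \<Longrightarrow> L2 l w \<Longrightarrow> integrable (Iv l) (\<lambda>x. c x * u x * w x)"
  using integrable_Linf_mult[of l c "\<lambda>x. u x * w x"] integrable_L2_mult[of l u w]
  by (simp add: mult.assoc)

lemma integrable_Linf_L2_square:
  "Linf l c \<Longrightarrow> L2 l u \<Longrightarrow> integrable (Iv l) (\<lambda>x. c x * (u x)\<^sup>2)"
  using integrable_Linf_L2_mult[of l c u u] by (simp add: power2_eq_square mult.assoc)

lemma H1_L2: "H1 l F \<Longrightarrow> L2 l F"
  unfolding H1_def by blast

lemma
  assumes "H1 l F"
  shows AE_eq_rep: "AE x in Iv l. F x = rep l F x"
    and abs_cont_deriv_rep: "abs_cont_deriv l (rep l F) (wderiv l F)"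
    and L2_wderiv: "L2 l (wderiv l F)"
proof -
  obtain Fr where "is_AC_rep l F Fr" using assms unfolding H1_def by blast
  then have r: "is_AC_rep l F (rep l F)" unfolding rep_def by (rule someI[where P = "is_AC_rep l F"])
  then show "AE x in Iv l. F x = rep l F x" unfolding is_AC_rep_def by blast
  from r obtain G where "has_weak_deriv l (rep l F) G" unfolding is_AC_rep_def by blast
  then have "has_weak_deriv l (rep l F) (wderiv l F)"
    unfolding wderiv_def by (rule someI[where P = "has_weak_deriv l (rep l F)"])
  then show "abs_cont_deriv l (rep l F) (wderiv l F)" "L2 l (wderiv l F)"
    using has_weak_deriv_imp_abs_cont_deriv unfolding has_weak_deriv_def by blast+
qed

lemma integration_by_parts_H1:
  assumes A: "H1 l A" and B: "H1 l B" and l: "0 \<le> l"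
  shows "(\<integral>x. wderiv l A x * B x \<partial>Iv l) + (\<integral>x. A x * wderiv l B x \<partial>Iv l)
      = rep l A l * rep l B l - rep l A 0 * rep l B 0"
proof -
  note [measurable] = A[THEN H1_L2, THEN L2_borel_measurable] B[THEN H1_L2, THEN L2_borel_measurable]
    A[THEN L2_wderiv, THEN L2_borel_measurable] B[THEN L2_wderiv, THEN L2_borel_measurable]
    A[THEN abs_cont_deriv_rep, THEN abs_cont_deriv_borel_measurable]
    B[THEN abs_cont_deriv_rep, THEN abs_cont_deriv_borel_measurable]
  have "(\<integral>x. wderiv l A x * B x \<partial>Iv l) = (\<integral>x. wderiv l A x * rep l B x \<partial>Iv l)"
    by (rule integral_cong_AE) (use AE_eq_rep[OF B] in \<open>auto elim: eventually_mono\<close>)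
  moreover have "(\<integral>x. A x * wderiv l B x \<partial>Iv l) = (\<integral>x. rep l A x * wderiv l B x \<partial>Iv l)"
    by (rule integral_cong_AE) (use AE_eq_rep[OF A] in \<open>auto elim: eventually_mono\<close>)
  ultimately show ?thesis
    using integration_by_parts_abs_cont[OF abs_cont_deriv_rep[OF A] abs_cont_deriv_rep[OF B] l] by simp
qed

lemma integration_by_parts_twice_H2:
  assumes l: "0 \<le> l" and M: "H2 l M" and g: "H2 l g"
    and g0: "rep l g 0 = 0" "rep l (wderiv l g) 0 = 0" and Ml: "rep l M l = 0"
  shows "(\<integral>x. wderiv l (wderiv l M) x * g x \<partial>Iv l)
      = rep l (wderiv l M) l * rep l g l + (\<integral>x. M x * wderiv l (wderiv l g) x \<partial>Iv l)"
  using integration_by_parts_H1[of l "wderiv l M" g] integration_by_parts_H1[of l M "wderiv l g"]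
    M g g0 Ml l unfolding H2_def by simp

lemma wirtinger_inequality_H1:
  assumes l: "0 < l" and u: "H1 l u" and u0: "rep l u 0 = 0"
  shows "(\<integral>x. (u x)\<^sup>2 \<partial>Iv l) \<le> 4 * l\<^sup>2 / pi\<^sup>2 * (\<integral>x. (wderiv l u x)\<^sup>2 \<partial>Iv l)"
proof -
  note [measurable] = u[THEN H1_L2, THEN L2_borel_measurable]
    u[THEN abs_cont_deriv_rep, THEN abs_cont_deriv_borel_measurable]
  have "(\<integral>x. (u x)\<^sup>2 \<partial>Iv l) = (\<integral>x. (rep l u x)\<^sup>2 \<partial>Iv l)"
    by (rule integral_cong_AE) (use AE_eq_rep[OF u] in \<open>auto elim: eventually_mono\<close>)
  also have "\<dots> \<le> 4 * l\<^sup>2 / pi\<^sup>2 * (\<integral>x. (wderiv l u x)\<^sup>2 \<partial>Iv l)"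
    using L2_wderiv[OF u]
    by (intro wirtinger_inequality[OF abs_cont_deriv_rep[OF u] u0 l]) (simp add: L2_def)
  finally show ?thesis .
qed

lemma wirtinger_inequality_H2:
  assumes l: "0 < l" and u: "H2 l u" and u0: "rep l u 0 = 0" "rep l (wderiv l u) 0 = 0"
  shows "(\<integral>x. (u x)\<^sup>2 \<partial>Iv l) \<le> (4 * l\<^sup>2 / pi\<^sup>2)\<^sup>2 * (\<integral>x. (wderiv l (wderiv l u) x)\<^sup>2 \<partial>Iv l)"
proof -
  have "(\<integral>x. (u x)\<^sup>2 \<partial>Iv l) \<le> 4 * l\<^sup>2 / pi\<^sup>2 * (\<integral>x. (wderiv l u x)\<^sup>2 \<partial>Iv l)"
    using wirtinger_inequality_H1[OF l _ u0(1)] u unfolding H2_def by blast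
  also have "\<dots> \<le> 4 * l\<^sup>2 / pi\<^sup>2 * (4 * l\<^sup>2 / pi\<^sup>2 * (\<integral>x. (wderiv l (wderiv l u) x)\<^sup>2 \<partial>Iv l))"
    using wirtinger_inequality_H1[OF l _ u0(2)] u unfolding H2_def by (intro mult_left_mono) auto
  finally show ?thesis by (simp add: power2_eq_square mult_ac)
qed

subsection \<open>Damping estimate\<close>

lemma damping_pointwise:
  fixes e \<eta> H m \<epsilon> g f :: real
  assumes e: "0 \<le> e" and \<eta>: "0 \<le> \<eta>" "\<eta> \<le> H" and m: "m \<le> \<eta> * e"
    and \<epsilon>: "0 < \<epsilon>" "\<epsilon> * H \<le> 4"
  shows "- (\<eta> * e * g\<^sup>2) - \<epsilon> * (e * f\<^sup>2) - \<epsilon> * (\<eta> * e * g * f) \<le> - ((1 - \<epsilon> * H / 4) * m * g\<^sup>2)"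
proof -
  have "- (\<eta> * e * g\<^sup>2) - \<epsilon> * (e * f\<^sup>2) - \<epsilon> * (\<eta> * e * g * f) + (1 - \<epsilon> * H / 4) * m * g\<^sup>2
      = - (\<epsilon> * e * (f + \<eta> * g / 2)\<^sup>2) - \<epsilon> * \<eta> * (H - \<eta>) * e * g\<^sup>2 / 4
        - (1 - \<epsilon> * H / 4) * (\<eta> * e - m) * g\<^sup>2"
    by (simp add: field_simps power2_eq_square)
  moreover have "0 \<le> \<epsilon> * e * (f + \<eta> * g / 2)\<^sup>2" using e \<epsilon> by simp
  moreover have "0 \<le> \<epsilon> * \<eta> * (H - \<eta>) * e * g\<^sup>2" using e \<epsilon> \<eta> by simp
  moreover have "0 \<le> (1 - \<epsilon> * H / 4) * (\<eta> * e - m) * g\<^sup>2" using \<epsilon> m by simp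
  ultimately show ?thesis by linarith
qed

lemma damping_estimate:
  fixes \<rho> a \<eta> u v w :: "real \<Rightarrow> real"
  assumes Linf: "Linf l \<rho>" "Linf l a" "Linf l \<eta>" and L2: "L2 l u" "L2 l v" "L2 l w"
    and a: "AE y in Iv l. 0 \<le> a y" and \<eta>: "AE y in Iv l. 0 \<le> \<eta> y \<and> \<eta> y \<le> H"
    and m: "AE y in Iv l. m \<le> \<eta> y * a y" and \<rho>: "AE y in Iv l. \<rho> y \<le> R" and R: "0 \<le> R"
    and poincare: "(\<integral>y. (w y)\<^sup>2 \<partial>Iv l) \<le> C * (\<integral>y. (u y)\<^sup>2 \<partial>Iv l)"
    and \<epsilon>: "0 < \<epsilon>" "\<epsilon> * H \<le> 4" "\<epsilon> * R * C \<le> (1 - \<epsilon> * H / 4) * m"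
  shows "- (\<integral>y. \<eta> y * a y * (u y)\<^sup>2 \<partial>Iv l) - \<epsilon> * (\<integral>y. a y * (v y)\<^sup>2 \<partial>Iv l)
      - \<epsilon> * (\<integral>y. \<eta> y * a y * u y * v y \<partial>Iv l) + \<epsilon> * (\<integral>y. \<rho> y * (w y)\<^sup>2 \<partial>Iv l) \<le> 0"
proof -
  define U where "U = (\<integral>y. (u y)\<^sup>2 \<partial>Iv l)"
  have U: "0 \<le> U" unfolding U_def by simp
  have \<eta>a: "Linf l (\<lambda>y. \<eta> y * a y)" by (rule Linf_mult[OF Linf(3,2)])
  have ints: "integrable (Iv l) (\<lambda>y. \<eta> y * a y * (u y)\<^sup>2)" "integrable (Iv l) (\<lambda>y. a y * (v y)\<^sup>2)"
    "integrable (Iv l) (\<lambda>y. \<eta> y * a y * u y * v y)" "integrable (Iv l) (\<lambda>y. \<rho> y * (w y)\<^sup>2)"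
    "integrable (Iv l) (\<lambda>y. (u y)\<^sup>2)" "integrable (Iv l) (\<lambda>y. (w y)\<^sup>2)"
    using integrable_Linf_L2_square[OF \<eta>a L2(1)] integrable_Linf_L2_square[OF Linf(2) L2(2)]
      integrable_Linf_L2_mult[OF \<eta>a L2(1,2)] integrable_Linf_L2_square[OF Linf(1) L2(3)]
      L2(1,3) unfolding L2_def by simp_all
  have "- (\<integral>y. \<eta> y * a y * (u y)\<^sup>2 \<partial>Iv l) - \<epsilon> * (\<integral>y. a y * (v y)\<^sup>2 \<partial>Iv l)
      - \<epsilon> * (\<integral>y. \<eta> y * a y * u y * v y \<partial>Iv l)
      = (\<integral>y. - (\<eta> y * a y * (u y)\<^sup>2) - \<epsilon> * (a y * (v y)\<^sup>2) - \<epsilon> * (\<eta> y * a y * u y * v y) \<partial>Iv l)"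
    using ints by simp
  also have "\<dots> \<le> (\<integral>y. - ((1 - \<epsilon> * H / 4) * m * (u y)\<^sup>2) \<partial>Iv l)"
  proof (rule integral_mono_AE)
    show "AE y in Iv l. - (\<eta> y * a y * (u y)\<^sup>2) - \<epsilon> * (a y * (v y)\<^sup>2) - \<epsilon> * (\<eta> y * a y * u y * v y)
        \<le> - ((1 - \<epsilon> * H / 4) * m * (u y)\<^sup>2)"
      using a \<eta> m by eventually_elim (use \<epsilon> in \<open>auto intro!: damping_pointwise\<close>)
  qed (use ints in auto)
  also have "\<dots> = - ((1 - \<epsilon> * H / 4) * m * U)" unfolding U_def by simp
  finally have coupled: "- (\<integral>y. \<eta> y * a y * (u y)\<^sup>2 \<partial>Iv l) - \<epsilon> * (\<integral>y. a y * (v y)\<^sup>2 \<partial>Iv l)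
      - \<epsilon> * (\<integral>y. \<eta> y * a y * u y * v y \<partial>Iv l) \<le> - ((1 - \<epsilon> * H / 4) * m * U)" .
  have "(\<integral>y. \<rho> y * (w y)\<^sup>2 \<partial>Iv l) \<le> (\<integral>y. R * (w y)\<^sup>2 \<partial>Iv l)"
    using \<rho> by (intro integral_mono_AE) (use ints in \<open>auto elim!: eventually_mono intro: mult_right_mono\<close>)
  also have "\<dots> \<le> R * (C * U)" using mult_left_mono[OF poincare R] by (simp add: U_def)
  finally have "\<epsilon> * (\<integral>y. \<rho> y * (w y)\<^sup>2 \<partial>Iv l) \<le> (\<epsilon> * R * C) * U"
    using \<epsilon>(1) by (simp add: mult_left_mono mult_ac)
  also have "\<dots> \<le> (1 - \<epsilon> * H / 4) * m * U" using \<epsilon>(3) U by (rule mult_right_mono)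
  finally show ?thesis using coupled by linarith
qed

lemma damping_constants:
  fixes \<epsilon> C R H m :: real
  assumes "0 < \<epsilon>" "\<epsilon> < 4 * m / (4 * C * R + H * m)" "0 \<le> C" "0 \<le> R" "0 < H" "0 < m"
  shows "\<epsilon> * H \<le> 4" "\<epsilon> * R * C \<le> (1 - \<epsilon> * H / 4) * m"
proof -
  have "0 < 4 * C * R + H * m" using assms by (simp add: add_nonneg_pos)
  then have less: "\<epsilon> * (4 * C * R) + \<epsilon> * (H * m) < 4 * m"
    using assms(2) by (simp add: pos_less_divide_eq distrib_left mult_ac)
  have "0 \<le> \<epsilon> * (4 * C * R)" using assms by simp
  then have "(\<epsilon> * H) * m < 4 * m" using less by (simp add: mult_ac)
  then show "\<epsilon> * H \<le> 4" using assms(6) by simp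
  show "\<epsilon> * R * C \<le> (1 - \<epsilon> * H / 4) * m" using less by (simp add: algebra_simps)
qed

lemma eps1_star_eq:
  "eps1_star l \<rho> EI \<eta>w = 4 * ess_inf l (\<lambda>y. \<eta>w y * EI y) /
     (4 * (4 * l\<^sup>2 / pi\<^sup>2)\<^sup>2 * ess_sup l \<rho> + ess_sup l \<eta>w * ess_inf l (\<lambda>y. \<eta>w y * EI y))"
  unfolding eps1_star_def by (simp add: field_simps power2_eq_square eval_nat_numeral)

lemma eps2_star_eq:
  "eps2_star l Iw GJ \<eta>p = 4 * ess_inf l (\<lambda>y. \<eta>p y * GJ y) /
     (4 * (4 * l\<^sup>2 / pi\<^sup>2) * ess_sup l Iw + ess_sup l \<eta>p * ess_inf l (\<lambda>y. \<eta>p y * GJ y))"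
  unfolding eps2_star_def by (simp add: field_simps power2_eq_square)

lemma damping_estimate_ess_bounds:
  fixes \<rho> a \<eta> u v w :: "real \<Rightarrow> real"
  assumes l: "0 < l" and Linf: "Linf l \<rho>" "Linf l a" "Linf l \<eta>"
    and pos: "ess_inf l \<rho> > 0" "ess_inf l a > 0" "ess_inf l \<eta> > 0"
    and L2: "L2 l u" "L2 l v" "L2 l w"
    and poincare: "(\<integral>y. (w y)\<^sup>2 \<partial>Iv l) \<le> C * (\<integral>y. (u y)\<^sup>2 \<partial>Iv l)" and C: "0 \<le> C"
    and \<epsilon>: "0 < \<epsilon>" "\<epsilon> < 4 * ess_inf l (\<lambda>y. \<eta> y * a y) /
        (4 * C * ess_sup l \<rho> + ess_sup l \<eta> * ess_inf l (\<lambda>y. \<eta> y * a y))"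
  shows "- (\<integral>y. \<eta> y * a y * (u y)\<^sup>2 \<partial>Iv l) - \<epsilon> * (\<integral>y. a y * (v y)\<^sup>2 \<partial>Iv l)
      - \<epsilon> * (\<integral>y. \<eta> y * a y * u y * v y \<partial>Iv l) + \<epsilon> * (\<integral>y. \<rho> y * (w y)\<^sup>2 \<partial>Iv l) \<le> 0"
proof -
  have sup_pos: "ess_sup l f > 0" if "Linf l f" "ess_inf l f > 0" for f
    using ess_inf_le_ess_sup[OF that(1) l] that(2) by linarith
  have AE_pos: "AE y in Iv l. 0 \<le> f y" if "Linf l f" "ess_inf l f > 0" for f
    using AE_ess_inf_le[OF that(1) l] by eventually_elim (use that(2) in auto)
  have m: "0 < ess_inf l (\<lambda>y. \<eta> y * a y)" by (rule ess_inf_mult_pos[OF l Linf(3,2) pos(3,2)])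
  note constants = damping_constants[OF \<epsilon> C less_imp_le[OF sup_pos[OF Linf(1) pos(1)]]
      sup_pos[OF Linf(3) pos(3)] m]
  show ?thesis
  proof (rule damping_estimate[OF Linf L2 AE_pos[OF Linf(2) pos(2)] _
        AE_ess_inf_le[OF Linf_mult[OF Linf(3,2)] l] AE_le_ess_sup[OF Linf(1) l]
        less_imp_le[OF sup_pos[OF Linf(1) pos(1)]] poincare \<epsilon>(1) constants])
    show "AE y in Iv l. 0 \<le> \<eta> y \<and> \<eta> y \<le> ess_sup l \<eta>"
      using AE_pos[OF Linf(3) pos(3)] AE_le_ess_sup[OF Linf(3) l] by eventually_elim simp
  qed
qed

subsection \<open>Dissipativity\<close>

lemma beam_dissipation:
  fixes \<rho> EI \<eta> f g M :: "real \<Rightarrow> real"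
  assumes l: "0 < l" and Linf: "Linf l \<rho>" "Linf l EI" "Linf l \<eta>"
    and pos: "ess_inf l \<rho> > 0" "ess_inf l EI > 0" "ess_inf l \<eta> > 0"
    and \<epsilon>: "0 < \<epsilon>" "\<epsilon> < eps1_star l \<rho> EI \<eta>" and k: "0 \<le> k"
    and f: "H2 l f" "rep l f 0 = 0" "rep l (wderiv l f) 0 = 0"
    and g: "H2 l g" "rep l g 0 = 0" "rep l (wderiv l g) 0 = 0"
    and M_eq: "M = (\<lambda>y. EI y * wderiv l (wderiv l f) y + \<eta> y * EI y * wderiv l (wderiv l g) y)"
    and M: "H2 l M" "rep l M l = 0" "rep l (wderiv l M) l = k * (rep l g l + \<epsilon> * rep l f l)"
  shows "(\<integral>y. EI y * wderiv l (wderiv l g) y * wderiv l (wderiv l f) y \<partial>Iv l)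
      - (\<integral>y. wderiv l (wderiv l M) y * g y \<partial>Iv l)
      + \<epsilon> * ((\<integral>y. \<rho> y * (g y)\<^sup>2 \<partial>Iv l) - (\<integral>y. wderiv l (wderiv l M) y * f y \<partial>Iv l)) \<le> 0"
proof -
  define f2 where "f2 = wderiv l (wderiv l f)"
  define g2 where "g2 = wderiv l (wderiv l g)"
  have L2: "L2 l g2" "L2 l f2" "L2 l g"
    using f(1) g(1) unfolding f2_def g2_def H2_def by (auto intro: L2_wderiv H1_L2)
  have ints: "integrable (Iv l) (\<lambda>y. EI y * g2 y * f2 y)" "integrable (Iv l) (\<lambda>y. EI y * (f2 y)\<^sup>2)"
      "integrable (Iv l) (\<lambda>y. \<eta> y * EI y * (g2 y)\<^sup>2)" "integrable (Iv l) (\<lambda>y. \<eta> y * EI y * g2 y * f2 y)"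
    using integrable_Linf_L2_mult[OF Linf(2) L2(1,2)] integrable_Linf_L2_square[OF Linf(2) L2(2)]
      integrable_Linf_L2_square[OF Linf_mult[OF Linf(3,2)] L2(1)]
      integrable_Linf_L2_mult[OF Linf_mult[OF Linf(3,2)] L2(1,2)] by simp_all
  have "(\<integral>y. M y * g2 y \<partial>Iv l) = (\<integral>y. EI y * g2 y * f2 y + \<eta> y * EI y * (g2 y)\<^sup>2 \<partial>Iv l)"
    by (rule Bochner_Integration.integral_cong) (simp_all add: M_eq f2_def g2_def algebra_simps power2_eq_square)
  then have Mg: "(\<integral>y. M y * g2 y \<partial>Iv l) = (\<integral>y. EI y * g2 y * f2 y \<partial>Iv l) + (\<integral>y. \<eta> y * EI y * (g2 y)\<^sup>2 \<partial>Iv l)"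
    using ints by simp
  have "(\<integral>y. M y * f2 y \<partial>Iv l) = (\<integral>y. EI y * (f2 y)\<^sup>2 + \<eta> y * EI y * g2 y * f2 y \<partial>Iv l)"
    by (rule Bochner_Integration.integral_cong) (simp_all add: M_eq f2_def g2_def algebra_simps power2_eq_square)
  then have Mf: "(\<integral>y. M y * f2 y \<partial>Iv l) = (\<integral>y. EI y * (f2 y)\<^sup>2 \<partial>Iv l) + (\<integral>y. \<eta> y * EI y * g2 y * f2 y \<partial>Iv l)"
    using ints by simp
  have boundary: "rep l (wderiv l M) l * rep l g l + \<epsilon> * (rep l (wderiv l M) l * rep l f l)
      = k * (rep l g l + \<epsilon> * rep l f l)\<^sup>2"
    by (simp add: M(3) power2_eq_square algebra_simps)
  have "- (\<integral>y. \<eta> y * EI y * (g2 y)\<^sup>2 \<partial>Iv l) - \<epsilon> * (\<integral>y. EI y * (f2 y)\<^sup>2 \<partial>Iv l)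
      - \<epsilon> * (\<integral>y. \<eta> y * EI y * g2 y * f2 y \<partial>Iv l) + \<epsilon> * (\<integral>y. \<rho> y * (g y)\<^sup>2 \<partial>Iv l) \<le> 0"
    by (rule damping_estimate_ess_bounds[OF l Linf pos L2 wirtinger_inequality_H2[OF l g, folded g2_def] _ \<epsilon>(1)])
       (use \<epsilon>(2) in \<open>simp_all add: eps1_star_eq mult.assoc\<close>)
  then show ?thesis
    using integration_by_parts_twice_H2[OF less_imp_le[OF l] M(1) g(1-3) M(2)]
      integration_by_parts_twice_H2[OF less_imp_le[OF l] M(1) f(1-3) M(2)]
      Mg Mf boundary mult_nonneg_nonneg[OF k zero_le_power2[of "rep l g l + \<epsilon> * rep l f l"]]
    unfolding f2_def g2_def by (simp add: algebra_simps)
qed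

lemma torsion_dissipation:
  fixes Iw GJ \<eta> h z T :: "real \<Rightarrow> real"
  assumes l: "0 < l" and Linf: "Linf l Iw" "Linf l GJ" "Linf l \<eta>"
    and pos: "ess_inf l Iw > 0" "ess_inf l GJ > 0" "ess_inf l \<eta> > 0"
    and \<epsilon>: "0 < \<epsilon>" "\<epsilon> < eps2_star l Iw GJ \<eta>" and k: "0 \<le> k"
    and h: "H1 l h" "rep l h 0 = 0" and z: "H1 l z" "rep l z 0 = 0"
    and T_eq: "T = (\<lambda>y. GJ y * wderiv l h y + \<eta> y * GJ y * wderiv l z y)"
    and T: "H1 l T" "rep l T l = - k * (rep l z l + \<epsilon> * rep l h l)"
  shows "(\<integral>y. GJ y * wderiv l z y * wderiv l h y \<partial>Iv l) + (\<integral>y. wderiv l T y * z y \<partial>Iv l)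
      + \<epsilon> * ((\<integral>y. Iw y * (z y)\<^sup>2 \<partial>Iv l) + (\<integral>y. wderiv l T y * h y \<partial>Iv l)) \<le> 0"
proof -
  define h1 where "h1 = wderiv l h"
  define z1 where "z1 = wderiv l z"
  have L2: "L2 l z1" "L2 l h1" "L2 l z"
    using h(1) z(1) unfolding h1_def z1_def by (auto intro: L2_wderiv H1_L2)
  have ints: "integrable (Iv l) (\<lambda>y. GJ y * z1 y * h1 y)" "integrable (Iv l) (\<lambda>y. GJ y * (h1 y)\<^sup>2)"
      "integrable (Iv l) (\<lambda>y. \<eta> y * GJ y * (z1 y)\<^sup>2)" "integrable (Iv l) (\<lambda>y. \<eta> y * GJ y * z1 y * h1 y)"
    using integrable_Linf_L2_mult[OF Linf(2) L2(1,2)] integrable_Linf_L2_square[OF Linf(2) L2(2)]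
      integrable_Linf_L2_square[OF Linf_mult[OF Linf(3,2)] L2(1)]
      integrable_Linf_L2_mult[OF Linf_mult[OF Linf(3,2)] L2(1,2)] by simp_all
  have "(\<integral>y. T y * z1 y \<partial>Iv l) = (\<integral>y. GJ y * z1 y * h1 y + \<eta> y * GJ y * (z1 y)\<^sup>2 \<partial>Iv l)"
    by (rule Bochner_Integration.integral_cong) (simp_all add: T_eq h1_def z1_def algebra_simps power2_eq_square)
  then have Tz: "(\<integral>y. T y * z1 y \<partial>Iv l) = (\<integral>y. GJ y * z1 y * h1 y \<partial>Iv l) + (\<integral>y. \<eta> y * GJ y * (z1 y)\<^sup>2 \<partial>Iv l)"
    using ints by simp
  have "(\<integral>y. T y * h1 y \<partial>Iv l) = (\<integral>y. GJ y * (h1 y)\<^sup>2 + \<eta> y * GJ y * z1 y * h1 y \<partial>Iv l)"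
    by (rule Bochner_Integration.integral_cong) (simp_all add: T_eq h1_def z1_def algebra_simps power2_eq_square)
  then have Th: "(\<integral>y. T y * h1 y \<partial>Iv l) = (\<integral>y. GJ y * (h1 y)\<^sup>2 \<partial>Iv l) + (\<integral>y. \<eta> y * GJ y * z1 y * h1 y \<partial>Iv l)"
    using ints by simp
  have Tz_parts: "(\<integral>y. wderiv l T y * z y \<partial>Iv l) = rep l T l * rep l z l
      - (\<integral>y. GJ y * z1 y * h1 y \<partial>Iv l) - (\<integral>y. \<eta> y * GJ y * (z1 y)\<^sup>2 \<partial>Iv l)"
    using integration_by_parts_H1[OF T(1) z(1) less_imp_le[OF l]] Tz z(2) by (simp add: z1_def)
  have Th_parts: "(\<integral>y. wderiv l T y * h y \<partial>Iv l) = rep l T l * rep l h l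
      - (\<integral>y. GJ y * (h1 y)\<^sup>2 \<partial>Iv l) - (\<integral>y. \<eta> y * GJ y * z1 y * h1 y \<partial>Iv l)"
    using integration_by_parts_H1[OF T(1) h(1) less_imp_le[OF l]] Th h(2) by (simp add: h1_def)
  have boundary: "rep l T l * rep l z l + \<epsilon> * (rep l T l * rep l h l) = - (k * (rep l z l + \<epsilon> * rep l h l)\<^sup>2)"
    by (simp add: T(2) power2_eq_square algebra_simps)
  have "- (\<integral>y. \<eta> y * GJ y * (z1 y)\<^sup>2 \<partial>Iv l) - \<epsilon> * (\<integral>y. GJ y * (h1 y)\<^sup>2 \<partial>Iv l)
      - \<epsilon> * (\<integral>y. \<eta> y * GJ y * z1 y * h1 y \<partial>Iv l) + \<epsilon> * (\<integral>y. Iw y * (z y)\<^sup>2 \<partial>Iv l) \<le> 0"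
    by (rule damping_estimate_ess_bounds[OF l Linf pos L2 wirtinger_inequality_H1[OF l z, folded z1_def] _ \<epsilon>(1)])
       (use \<epsilon>(2) in \<open>simp_all add: eps2_star_eq mult.assoc\<close>)
  then show ?thesis
    using boundary mult_nonneg_nonneg[OF k zero_le_power2[of "rep l z l + \<epsilon> * rep l h l"]]
    unfolding Tz_parts Th_parts h1_def[symmetric] z1_def[symmetric] by (simp only: ring_distribs)
qed

lemma ip2_A1_eq:
  fixes l :: real and \<rho> Iw EI GJ \<eta>w \<eta>p f g h z :: "real \<Rightarrow> real"
  defines "f2 \<equiv> wderiv l (wderiv l f)" and "g2 \<equiv> wderiv l (wderiv l g)"
    and "h1 \<equiv> wderiv l h" and "z1 \<equiv> wderiv l z"
    and "M2 \<equiv> wderiv l (wderiv l (Mom l EI \<eta>w (f, g, h, z)))"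
    and "T1 \<equiv> wderiv l (Tor l GJ \<eta>p (f, g, h, z))"
  assumes Linf: "Linf l \<rho>" "Linf l Iw" "Linf l EI" "Linf l GJ"
    and pos: "AE y in Iv l. 0 < \<rho> y" "AE y in Iv l. 0 < Iw y"
    and L2: "L2 l f" "L2 l g" "L2 l h" "L2 l z" "L2 l f2" "L2 l g2" "L2 l h1" "L2 l z1" "L2 l M2" "L2 l T1"
  shows "ip2 l EI \<rho> GJ Iw \<epsilon>1 \<epsilon>2 (A1 l \<rho> Iw EI GJ \<eta>w \<eta>p (f, g, h, z)) (f, g, h, z)
    = ((\<integral>y. EI y * g2 y * f2 y \<partial>Iv l) - (\<integral>y. M2 y * g y \<partial>Iv l)
        + \<epsilon>1 * ((\<integral>y. \<rho> y * (g y)\<^sup>2 \<partial>Iv l) - (\<integral>y. M2 y * f y \<partial>Iv l)))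
      + ((\<integral>y. GJ y * z1 y * h1 y \<partial>Iv l) + (\<integral>y. T1 y * z y \<partial>Iv l)
        + \<epsilon>2 * ((\<integral>y. Iw y * (z y)\<^sup>2 \<partial>Iv l) + (\<integral>y. T1 y * h y \<partial>Iv l)))"
    (is "_ = ?rhs")
proof -
  note [measurable] = L2[THEN L2_borel_measurable] Linf[THEN Linf_borel_measurable]
  note ints = integrable_Linf_L2_mult[OF Linf(3) L2(6) L2(5)] integrable_Linf_L2_mult[OF Linf(4) L2(8) L2(7)]
    integrable_Linf_L2_square[OF Linf(1) L2(2)] integrable_Linf_L2_square[OF Linf(2) L2(4)]
    integrable_L2_mult[OF L2(9) L2(2)] integrable_L2_mult[OF L2(9) L2(1)]
    integrable_L2_mult[OF L2(10) L2(4)] integrable_L2_mult[OF L2(10) L2(3)]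
  have "ip2 l EI \<rho> GJ Iw \<epsilon>1 \<epsilon>2 (A1 l \<rho> Iw EI GJ \<eta>w \<eta>p (f, g, h, z)) (f, g, h, z)
    = (\<integral>y. EI y * g2 y * f2 y + \<rho> y * (- (1 / \<rho> y) * M2 y) * g y + GJ y * z1 y * h1 y
          + Iw y * (1 / Iw y * T1 y) * z y \<partial>Iv l)
      + (\<epsilon>1 * (\<integral>y. \<rho> y * (g y * g y + - (1 / \<rho> y) * M2 y * f y) \<partial>Iv l)
      + \<epsilon>2 * (\<integral>y. Iw y * (z y * z y + 1 / Iw y * T1 y * h y) \<partial>Iv l))"
    unfolding ip2_def ip1_def A1_def assms(1-6) by simp
  also have "\<dots> = (\<integral>y. EI y * g2 y * f2 y - M2 y * g y + GJ y * z1 y * h1 y + T1 y * z y \<partial>Iv l)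
      + (\<epsilon>1 * (\<integral>y. \<rho> y * (g y)\<^sup>2 - M2 y * f y \<partial>Iv l)
      + \<epsilon>2 * (\<integral>y. Iw y * (z y)\<^sup>2 + T1 y * h y \<partial>Iv l))"
  proof -
    have "(\<integral>y. EI y * g2 y * f2 y + \<rho> y * (- (1 / \<rho> y) * M2 y) * g y + GJ y * z1 y * h1 y
        + Iw y * (1 / Iw y * T1 y) * z y \<partial>Iv l)
      = (\<integral>y. EI y * g2 y * f2 y - M2 y * g y + GJ y * z1 y * h1 y + T1 y * z y \<partial>Iv l)"
      by (rule integral_cong_AE) (measurable, use pos in \<open>eventually_elim, simp\<close>)
    moreover have "(\<integral>y. \<rho> y * (g y * g y + - (1 / \<rho> y) * M2 y * f y) \<partial>Iv l)
      = (\<integral>y. \<rho> y * (g y)\<^sup>2 - M2 y * f y \<partial>Iv l)"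
      by (rule integral_cong_AE)
        (measurable, use pos(1) in \<open>eventually_elim, simp add: field_simps power2_eq_square\<close>)
    moreover have "(\<integral>y. Iw y * (z y * z y + 1 / Iw y * T1 y * h y) \<partial>Iv l)
      = (\<integral>y. Iw y * (z y)\<^sup>2 + T1 y * h y \<partial>Iv l)"
      by (rule integral_cong_AE)
        (measurable, use pos(2) in \<open>eventually_elim, simp add: field_simps power2_eq_square\<close>)
    ultimately show ?thesis by simp
  qed
  also have "\<dots> = ?rhs"
    using ints by (simp add: algebra_simps)
  finally show ?thesis .
qed

theorem lemma4:
  fixes l k1 k2 \<epsilon>1 \<epsilon>2 :: real
    and \<rho> Iw EI GJ \<eta>w \<eta>p :: "real \<Rightarrow> real"
  assumes "l > 0"
    and "Linf l \<rho>" "Linf l Iw" "Linf l EI" "Linf l GJ" "Linf l \<eta>w" "Linf l \<eta>p"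
    and "ess_inf l \<rho> > 0" "ess_inf l Iw > 0" "ess_inf l EI > 0" "ess_inf l GJ > 0"
        "ess_inf l \<eta>w > 0" "ess_inf l \<eta>p > 0"
    and "k1 \<ge> 0" "k2 \<ge> 0"
    and "\<epsilon>1 > 0" "\<epsilon>1 < min (eps1_star l \<rho> EI \<eta>w) (1 / Km l \<rho> Iw EI GJ)"
    and "\<epsilon>2 > 0" "\<epsilon>2 < min (eps2_star l Iw GJ \<eta>p) (1 / Km l \<rho> Iw EI GJ)"
    and "X \<in> DA1 l EI GJ \<eta>w \<eta>p k1 k2 \<epsilon>1 \<epsilon>2"
  shows "ip2 l EI \<rho> GJ Iw \<epsilon>1 \<epsilon>2 (A1 l \<rho> Iw EI GJ \<eta>w \<eta>p X) X \<le> 0"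
proof -
  obtain f g h z where X: "X = (f, g, h, z)" by (cases X)
  define M where "M = Mom l EI \<eta>w (f, g, h, z)"
  define T where "T = Tor l GJ \<eta>p (f, g, h, z)"
  have D: "H2 l f" "H2 l g" "H1 l h" "H1 l z" "H2 l M" "H1 l T"
    "rep l f 0 = 0" "rep l (wderiv l f) 0 = 0" "rep l g 0 = 0" "rep l (wderiv l g) 0 = 0"
    "rep l h 0 = 0" "rep l z 0 = 0" "rep l M l = 0"
    "rep l (wderiv l M) l = k1 * (rep l g l + \<epsilon>1 * rep l f l)"
    "rep l T l = - k2 * (rep l z l + \<epsilon>2 * rep l h l)"
    using assms(20) unfolding DA1_def Hspace_def X M_def T_def by auto
  have M_eq: "M = (\<lambda>y. EI y * wderiv l (wderiv l f) y + \<eta>w y * EI y * wderiv l (wderiv l g) y)"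
    and T_eq: "T = (\<lambda>y. GJ y * wderiv l h y + \<eta>p y * GJ y * wderiv l z y)"
    by (simp_all add: M_def T_def Mom_def Tor_def)
  have \<epsilon>: "\<epsilon>1 < eps1_star l \<rho> EI \<eta>w" "\<epsilon>2 < eps2_star l Iw GJ \<eta>p" using assms(17,19) by simp_all
  have L2: "L2 l f" "L2 l g" "L2 l h" "L2 l z" "L2 l (wderiv l (wderiv l f))"
    "L2 l (wderiv l (wderiv l g))" "L2 l (wderiv l h)" "L2 l (wderiv l z)"
    "L2 l (wderiv l (wderiv l M))" "L2 l (wderiv l T)"
    using D(1-6) unfolding H2_def by (auto intro: H1_L2 L2_wderiv)
  have AE_pos: "AE y in Iv l. 0 < \<rho> y" "AE y in Iv l. 0 < Iw y"
    using AE_ess_inf_le[OF assms(2,1)] AE_ess_inf_le[OF assms(3,1)] assms(8,9)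
    by (auto elim: eventually_mono)
  note energy = ip2_A1_eq[OF assms(2-5) AE_pos L2[unfolded M_def T_def], folded M_def T_def]
  note beam = beam_dissipation[OF assms(1,2,4,6,8,10,12,16) \<epsilon>(1) assms(14) D(1,7,8) D(2,9,10) M_eq D(5,13,14)]
  note torsion = torsion_dissipation[OF assms(1,3,5,7,9,11,13,18) \<epsilon>(2) assms(15) D(3,11) D(4,12) T_eq D(6,15)]
  show ?thesis unfolding X energy using beam torsion by linarith
qed

end
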